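(* Let $\lambda\ge1$, let $x^*$ be an optimal solution to $(P_\lambda)$ (assumed feasible), let $y^*$ be an optimal solution to $\max_{y\in\mathbb{R}^{\mathcal{S}}_{\ge0}}g_\lambda(y)$, and let $\mathcal{L}$ be a laminar decomposition of $x^*$. Then for every $L\in\mathcal{L}$, all edges of $\mathrm{supp}(x^* )\cap E^{\mathcal{L}}_L$ have the same $c^{y^*}$-cost.
   Context: Setting: $G=(V,E)$ undirected connected graph, costs $c_e\ge0$, a chain $\mathcal{S}$ of node sets $S_1\subsetneq\dots\subsetneq S_\ell\subsetneq V$, integers $b_S$. $E(S)$ = edges with both ends in $S$, $\delta(S)$ = edges with exactly one end in $S$, $z(F)=\sum_{e\in F}z_e$, $\mathrm{supp}(z)=\{e:z_e>0\}$. $P_{ST}(G)=\{x\in\mathbb{R}^E_{\ge0}: x(E(S))\le|S|-1\ \forall\emptyset\ne S\subsetneq V,\ x(E)=|V|-1\}$. $(P_\lambda)$: minimize $\sum_ec_ex_e$ over $x\in P_{ST}(G)$ with $x(\delta(S))\le\lambda b_S$ for all $S\in\mathcal{S}$. For $y\in\mathbb{R}^{\mathcal{S}}$, $c^y_e=c_e+\sum_{S\in\mathcal{S}:e\in\delta(S)}y_S$ and $g_\lambda(y)=\min_{x\in P_{ST}(G)}\big(\sum_ec^y_ex_e-\lambda\sum_{S}b_Sy_S\big)$. A laminar decomposition of $x\in P_{ST}(G)$ is an inclusion-wise maximal laminar family of nonempty sets $A\subseteq V$ with $x(E(A))=|A|-1$. For $L\in\mathcal{L}$, $E^{\mathcal{L}}_L$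 is the edge set of the graph obtained from $(L,E(L))$ by contracting the maximal members of $\mathcal{L}$ strictly contained in $L$ (i.e., edges of $E(L)$ not contained in any such member). *)

theory Defs
  imports Complex_Main
begin

definition graph :: "'a set \<Rightarrow> 'a set set \<Rightarrow> bool" where
  "graph V E \<longleftrightarrow> finite V \<and> (\<forall>e\<in>E. e \<subseteq> V \<and> card e = 2)"

definition connected_graph :: "'a set \<Rightarrow> 'a set set \<Rightarrow> bool" where
  "connected_graph V E \<longleftrightarrow> graph V E \<and> V \<noteq> {} \<and>
     (\<forall>u\<in>V. \<forall>v\<in>V. (u, v) \<in> {(a, b). {a, b} \<in> E}\<^sup>*)"

definition inside :: "'a set set \<Rightarrow> 'a set \<Rightarrow> 'a set set" where
  "inside E S = {e \<in> E. e \<subseteq> S}"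

definition cut :: "'a set set \<Rightarrow> 'a set \<Rightarrow> 'a set set" where
  "cut E S = {e \<in> E. card (e \<inter> S) = 1}"

definition P_ST :: "'a set \<Rightarrow> 'a set set \<Rightarrow> ('a set \<Rightarrow> real) set" where
  "P_ST V E = {x. (\<forall>e\<in>E. x e \<ge> 0)
      \<and> (\<forall>S. S \<noteq> {} \<and> S \<subset> V \<longrightarrow> sum x (inside E S) \<le> real (card S) - 1)
      \<and> sum x E = real (card V) - 1}"

definition chain_family :: "'a set \<Rightarrow> 'a set set \<Rightarrow> bool" where
  "chain_family V \<S> \<longleftrightarrow> (\<forall>S\<in>\<S>. S \<subset> V) \<and> (\<forall>S\<in>\<S>. \<forall>T\<in>\<S>. S \<subseteq> T \<or> T \<subseteq> S)"

definition cost :: "'a set set \<Rightarrow> ('a set \<Rightarrow> real) \<Rightarrow> ('a set \<Rightarrow> real) \<Rightarrow> real" where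
  "cost E c x = (\<Sum>e\<in>E. c e * x e)"

definition feasible_P :: "'a set \<Rightarrow> 'a set set \<Rightarrow> 'a set set \<Rightarrow> ('a set \<Rightarrow> int) \<Rightarrow> real
    \<Rightarrow> ('a set \<Rightarrow> real) \<Rightarrow> bool" where
  "feasible_P V E \<S> b lam x \<longleftrightarrow> x \<in> P_ST V E \<and>
     (\<forall>S\<in>\<S>. sum x (cut E S) \<le> lam * real_of_int (b S))"

definition optimal_P :: "'a set \<Rightarrow> 'a set set \<Rightarrow> ('a set \<Rightarrow> real) \<Rightarrow> 'a set set
    \<Rightarrow> ('a set \<Rightarrow> int) \<Rightarrow> real \<Rightarrow> ('a set \<Rightarrow> real) \<Rightarrow> bool" where
  "optimal_P V E c \<S> b lam x \<longleftrightarrow> feasible_P V E \<S> b lam x \<and>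
     (\<forall>x'. feasible_P V E \<S> b lam x' \<longrightarrow> cost E c x \<le> cost E c x')"

definition cy :: "'a set set \<Rightarrow> 'a set set \<Rightarrow> ('a set \<Rightarrow> real) \<Rightarrow> ('a set \<Rightarrow> real)
    \<Rightarrow> 'a set \<Rightarrow> real" where
  "cy E \<S> c y e = c e + (\<Sum>S\<in>{S\<in>\<S>. e \<in> cut E S}. y S)"

text \<open>Lagrangian dual function g_lambda (the minimum over the polytope, written as an infimum).\<close>
definition g_lam :: "'a set \<Rightarrow> 'a set set \<Rightarrow> ('a set \<Rightarrow> real) \<Rightarrow> 'a set set
    \<Rightarrow> ('a set \<Rightarrow> int) \<Rightarrow> real \<Rightarrow> ('a set \<Rightarrow> real) \<Rightarrow> real" where
  "g_lam V E c \<S> b lam y =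
     (INF x\<in>P_ST V E. cost E (cy E \<S> c y) x - lam * (\<Sum>S\<in>\<S>. real_of_int (b S) * y S))"

definition dual_optimal :: "'a set \<Rightarrow> 'a set set \<Rightarrow> ('a set \<Rightarrow> real) \<Rightarrow> 'a set set
    \<Rightarrow> ('a set \<Rightarrow> int) \<Rightarrow> real \<Rightarrow> ('a set \<Rightarrow> real) \<Rightarrow> bool" where
  "dual_optimal V E c \<S> b lam y \<longleftrightarrow> (\<forall>S\<in>\<S>. y S \<ge> 0) \<and>
     (\<forall>y'. (\<forall>S\<in>\<S>. y' S \<ge> 0) \<longrightarrow> g_lam V E c \<S> b lam y' \<le> g_lam V E c \<S> b lam y)"

definition laminar :: "'a set set \<Rightarrow> bool" where
  "laminar \<L> \<longleftrightarrow> (\<forall>A\<in>\<L>. \<forall>B\<in>\<L>. A \<subseteq> B \<or> B \<subseteq> A \<or> A \<inter> B = {})"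

definition tight_laminar :: "'a set \<Rightarrow> 'a set set \<Rightarrow> ('a set \<Rightarrow> real) \<Rightarrow> 'a set set \<Rightarrow> bool" where
  "tight_laminar V E x \<L> \<longleftrightarrow> laminar \<L> \<and>
     (\<forall>A\<in>\<L>. A \<noteq> {} \<and> A \<subseteq> V \<and> sum x (inside E A) = real (card A) - 1)"

definition laminar_decomposition :: "'a set \<Rightarrow> 'a set set \<Rightarrow> ('a set \<Rightarrow> real) \<Rightarrow> 'a set set \<Rightarrow> bool" where
  "laminar_decomposition V E x \<L> \<longleftrightarrow> tight_laminar V E x \<L> \<and>
     (\<forall>\<L>'. tight_laminar V E x \<L>' \<and> \<L> \<subseteq> \<L>' \<longrightarrow> \<L>' = \<L>)"

text \<open>E^L_L: edges of E(L) not contained in any maximal member of the family strictly inside L.\<close>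
definition maximal_children :: "'a set set \<Rightarrow> 'a set \<Rightarrow> 'a set set" where
  "maximal_children \<L> L = {M\<in>\<L>. M \<subset> L \<and> \<not> (\<exists>M'\<in>\<L>. M \<subset> M' \<and> M' \<subset> L)}"

definition contracted_edges :: "'a set set \<Rightarrow> 'a set set \<Rightarrow> 'a set \<Rightarrow> 'a set set" where
  "contracted_edges E \<L> L = {e\<in>inside E L. \<forall>M\<in>maximal_children \<L> L. \<not> e \<subseteq> M}"

end

(* The Lagrangian dual of (P_\<lambda>) has no duality gap: the KKT multipliers of the linear program,
   obtained from Farkas' lemma, restricted to the degree rows give a dual solution of value
   c(x\<^sup>\<star>). By complementary slackness x\<^sup>\<star> then minimises the modified costs c\<^sup>y\<^sup>\<star> over the
   spanning tree polytope.

   For edges e, f in supp(x\<^sup>\<star>) and in E^L_L, every tight set T containing e also contains f: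
   T \<inter> L is tight, and uncrossing it with the children of L that it meets gives a tight set that
   is laminar with the decomposition, hence equal to L by maximality. Uncrossing leaves no
   positive edge between the pieces, so f, which lies in no child, lies in T \<inter> L.
   Consequently every constraint of the spanning tree polytope that is active at x\<^sup>\<star> is orthogonal
   to 1_e - 1_f, so x\<^sup>\<star> + t (1_e - 1_f) stays feasible for small |t| of either sign, and
   optimality of x\<^sup>\<star> for c\<^sup>y\<^sup>\<star> forces c\<^sup>y\<^sup>\<star>(e) = c\<^sup>y\<^sup>\<star>(f). *)

theory Submission
  imports Defs
begin

section \<open>Linear programming over a finite set of constraints\<close>

definition dot :: "'e set \<Rightarrow> ('e \<Rightarrow> real) \<Rightarrow> ('e \<Rightarrow> real) \<Rightarrow> real" where
  "dot E a z = (\<Sum>e\<in>E. a e * z e)"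

definition polyhedron :: "'e set \<Rightarrow> 'j set \<Rightarrow> ('j \<Rightarrow> 'e \<Rightarrow> real) \<Rightarrow> ('j \<Rightarrow> real)
    \<Rightarrow> ('e \<Rightarrow> real) set" where
  "polyhedron E J a \<beta> = {x. \<forall>j\<in>J. dot E (a j) x \<le> \<beta> j}"

lemma dot_add_scaled: "dot E a (\<lambda>e. p e + t * q e) = dot E a p + t * dot E a q"
  unfolding dot_def by (simp add: algebra_simps sum.distrib sum_distrib_left)

lemma dot_add_left: "dot E (\<lambda>e. p e + q e) z = dot E p z + dot E q z"
  unfolding dot_def by (simp add: algebra_simps sum.distrib)

lemma dot_uminus_left: "dot E (\<lambda>e. - a e) z = - dot E a z"
  unfolding dot_def by (simp add: sum_negf)

lemma dot_sum_left: "dot E (\<lambda>e. \<Sum>j\<in>J. u j * a j e) z = (\<Sum>j\<in>J. u j * dot E (a j) z)"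
  unfolding dot_def by (simp add: sum_distrib_left sum_distrib_right sum.swap[of _ E] mult.assoc)

lemma dot_indicator:
  assumes "finite E" "A \<subseteq> E"
  shows "dot E (\<lambda>e. of_bool (e \<in> A)) x = sum x A"
proof -
  have "dot E (\<lambda>e. of_bool (e \<in> A)) x = (\<Sum>e\<in>E. if e \<in> A then x e else 0)"
    unfolding dot_def by (intro sum.cong) auto
  also have "\<dots> = sum x {e\<in>E. e \<in> A}"
    using assms(1) by (rule sum.inter_filter[symmetric])
  also have "{e\<in>E. e \<in> A} = A"
    using assms(2) by auto
  finally show ?thesis .
qed

lemma dot_unit_diff:
  assumes "finite E" "e \<in> E" "f \<in> E"
  shows "dot E a (\<lambda>g. of_bool (g = e) - of_bool (g = f)) = a e - a f"
  using assms by (simp add: dot_def right_diff_distrib sum_subtractf of_bool_def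
      if_distrib[where f="\<lambda>v. _ * v"] cong: if_cong)

lemma dot_self_pos:
  assumes "finite E" "e \<in> E" "c e \<noteq> 0"
  shows "dot E c c > 0"
proof -
  have "c e * c e \<le> dot E c c"
    unfolding dot_def using assms by (intro member_le_sum) auto
  then show ?thesis using assms(3) by (smt (verit) not_real_square_gt_zero)
qed

lemma dot_projection:
  "dot E q (\<lambda>e. z' e - (dot E p z' / \<alpha>) * z e) = dot E (\<lambda>e. q e - (dot E q z / \<alpha>) * p e) z'"
  unfolding dot_def
  by (simp add: algebra_simps sum_subtractf sum_distrib_left sum_divide_distrib)
    (subst sum.swap, simp add: mult_ac)

lemma cone_combination_insert:
  assumes "finite J" "j0 \<notin> J" "\<forall>j\<in>J. u j \<ge> 0" "k \<ge> 0"
    and "\<forall>e\<in>E. c e = (\<Sum>j\<in>J. u j * a j e) + k * a j0 e"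
  shows "\<exists>u. (\<forall>j\<in>insert j0 J. u j \<ge> 0) \<and> (\<forall>e\<in>E. c e = (\<Sum>j\<in>insert j0 J. u j * a j e))"
proof (intro exI conjI)
  have "(\<Sum>j\<in>J. (u(j0 := k)) j * a j e) = (\<Sum>j\<in>J. u j * a j e)" for e
    using assms(2) by (intro sum.cong) auto
  then show "\<forall>e\<in>E. c e = (\<Sum>j\<in>insert j0 J. (u(j0 := k)) j * a j e)"
    using assms by (simp add: add.commute)
qed (use assms in auto)

text \<open>If a certificate \<open>z\<close> for the smaller system has
  \<open>a j0 \<bullet> z > 0\<close>, project \<open>c\<close> and the other generators along \<open>a j0\<close> so that they become
  orthogonal to \<open>z\<close> (Fourier--Motzkin elimination) and apply the induction hypothesis again.\<close>
lemma farkas_lemma: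
  assumes "finite E" "finite J"
  shows "(\<exists>u. (\<forall>j\<in>J. u j \<ge> 0) \<and> (\<forall>e\<in>E. c e = (\<Sum>j\<in>J. u j * a j e)))
       \<or> (\<exists>z. (\<forall>j\<in>J. dot E (a j) z \<le> 0) \<and> dot E c z > 0)"
  using assms(2)
proof (induction J arbitrary: c a rule: finite_induct)
  case empty
  show ?case
  proof (cases "\<forall>e\<in>E. c e = 0")
    case False
    then show ?thesis using dot_self_pos[OF assms(1)] by auto
  qed simp
next
  case (insert j0 J)
  from insert.IH[of c a] show ?case
  proof (elim disjE exE conjE)
    fix u assume "\<forall>j\<in>J. u j \<ge> 0" "\<forall>e\<in>E. c e = (\<Sum>j\<in>J. u j * a j e)"
    then show ?thesis using cone_combination_insert[OF insert.hyps, of u 0 E c a] by simp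
  next
    fix z assume z: "\<forall>j\<in>J. dot E (a j) z \<le> 0" "dot E c z > 0"
    define \<alpha> where "\<alpha> = dot E (a j0) z"
    show ?thesis
    proof (cases "\<alpha> \<le> 0")
      case True
      then show ?thesis using z unfolding \<alpha>_def by auto
    next
      case False
      define a' where "a' = (\<lambda>j e. a j e - (dot E (a j) z / \<alpha>) * a j0 e)"
      define c' where "c' = (\<lambda>e. c e - (dot E c z / \<alpha>) * a j0 e)"
      from insert.IH[of c' a'] show ?thesis
      proof (elim disjE exE conjE)
        fix u assume u: "\<forall>j\<in>J. u j \<ge> 0" "\<forall>e\<in>E. c' e = (\<Sum>j\<in>J. u j * a' j e)"
        define k where "k = (dot E c z - (\<Sum>j\<in>J. u j * dot E (a j) z)) / \<alpha>"
        have "(\<Sum>j\<in>J. u j * dot E (a j) z) \<le> 0"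
          using u(1) z(1) by (intro sum_nonpos) (simp add: mult_nonneg_nonpos)
        then have "k \<ge> 0" using False z(2) unfolding k_def by simp
        moreover have "\<forall>e\<in>E. c e = (\<Sum>j\<in>J. u j * a j e) + k * a j0 e"
          using u(2) False unfolding a'_def c'_def k_def
          by (simp add: algebra_simps sum_subtractf sum_distrib_left sum_distrib_right
              sum_divide_distrib add_divide_distrib diff_divide_distrib)
        ultimately show ?thesis using cone_combination_insert[OF insert.hyps u(1)] by blast
      next
        fix z' assume z': "\<forall>j\<in>J. dot E (a' j) z' \<le> 0" "dot E c' z' > 0"
        define w where "w = (\<lambda>e. z' e - (dot E (a j0) z' / \<alpha>) * z e)"
        have "dot E (a j0) w = 0"
          using False unfolding w_def dot_projection \<alpha>_def[symmetric] by (simp add: dot_def)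
        moreover have "\<forall>j\<in>J. dot E (a j) w \<le> 0" "dot E c w > 0"
          using z' unfolding w_def dot_projection a'_def c'_def by auto
        ultimately have "(\<forall>j\<in>insert j0 J. dot E (a j) w \<le> 0) \<and> dot E c w > 0" by simp
        then show ?thesis by blast
      qed
    qed
  qed
qed

lemma polyhedron_feasible_direction:
  assumes "finite J" and x: "x \<in> polyhedron E J a \<beta>"
    and active: "\<forall>j\<in>J. dot E (a j) x = \<beta> j \<longrightarrow> dot E (a j) d \<le> 0"
  shows "\<exists>\<epsilon>>0. (\<lambda>e. x e + \<epsilon> * d e) \<in> polyhedron E J a \<beta>"
proof -
  define slack where "slack j = (\<beta> j - dot E (a j) x) / (\<bar>dot E (a j) d\<bar> + 1)" for j
  define \<epsilon> where "\<epsilon> = Min (insert 1 (slack ` {j\<in>J. dot E (a j) x < \<beta> j}))"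
  have fin: "finite (insert 1 (slack ` {j\<in>J. dot E (a j) x < \<beta> j}))"
    using assms(1) by simp
  have "\<epsilon> > 0"
    unfolding \<epsilon>_def using fin by (subst Min_gr_iff) (auto simp: slack_def add_pos_nonneg)
  moreover have "dot E (a j) x + \<epsilon> * dot E (a j) d \<le> \<beta> j" if "j \<in> J" for j
  proof (cases "dot E (a j) x < \<beta> j")
    case True
    then have "\<epsilon> \<le> slack j" unfolding \<epsilon>_def using fin that by (intro Min_le) auto
    then have "\<epsilon> * (\<bar>dot E (a j) d\<bar> + 1) \<le> \<beta> j - dot E (a j) x"
      unfolding slack_def by (simp add: pos_le_divide_eq add_pos_nonneg)
    moreover have "\<epsilon> * dot E (a j) d \<le> \<epsilon> * (\<bar>dot E (a j) d\<bar> + 1)"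
      using \<open>\<epsilon> > 0\<close> by (intro mult_left_mono) auto
    ultimately show ?thesis by linarith
  next
    case False
    then have "dot E (a j) x = \<beta> j" using x that unfolding polyhedron_def by force
    then have "\<epsilon> * dot E (a j) d \<le> 0"
      using active that \<open>\<epsilon> > 0\<close> by (simp add: mult_nonneg_nonpos)
    then show ?thesis using \<open>dot E (a j) x = \<beta> j\<close> by simp
  qed
  ultimately show ?thesis by (intro exI[of _ \<epsilon>]) (simp add: polyhedron_def dot_add_scaled)
qed

lemma polyhedron_minimizer_direction:
  assumes "finite J" and x: "x \<in> polyhedron E J a \<beta>"
    and min: "\<forall>x'\<in>polyhedron E J a \<beta>. dot E c x \<le> dot E c x'"
    and active: "\<forall>j\<in>J. dot E (a j) x = \<beta> j \<longrightarrow> dot E (a j) d \<le> 0"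
  shows "dot E c d \<ge> 0"
proof -
  obtain \<epsilon> where "\<epsilon> > 0" "(\<lambda>e. x e + \<epsilon> * d e) \<in> polyhedron E J a \<beta>"
    using polyhedron_feasible_direction[OF assms(1) x active] by blast
  then have "dot E c x \<le> dot E c (\<lambda>e. x e + \<epsilon> * d e)" using min by blast
  then have "dot E c x \<le> dot E c x + \<epsilon> * dot E c d" unfolding dot_add_scaled .
  then show ?thesis using \<open>\<epsilon> > 0\<close> by (simp add: zero_le_mult_iff)
qed

text \<open>Karush--Kuhn--Tucker conditions: Farkas' lemma applied to the active constraints.\<close>
lemma polyhedron_minimizer_multipliers:
  assumes "finite E" "finite J" and x: "x \<in> polyhedron E J a \<beta>"
    and min: "\<forall>x'\<in>polyhedron E J a \<beta>. dot E c x \<le> dot E c x'"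
  obtains u where "\<forall>j\<in>J. u j \<ge> 0" "\<forall>j\<in>J. u j \<noteq> 0 \<longrightarrow> dot E (a j) x = \<beta> j"
    "\<forall>e\<in>E. c e + (\<Sum>j\<in>J. u j * a j e) = 0"
proof -
  define J0 where "J0 = {j\<in>J. dot E (a j) x = \<beta> j}"
  have "finite J0" using assms(2) unfolding J0_def by simp
  have "dot E c z \<ge> 0" if "\<forall>j\<in>J0. dot E (a j) z \<le> 0" for z
    using polyhedron_minimizer_direction[OF assms(2) x min, of z] that unfolding J0_def by auto
  then have "\<not> (\<exists>z. (\<forall>j\<in>J0. dot E (a j) z \<le> 0) \<and> dot E (\<lambda>e. - c e) z > 0)"
    unfolding dot_uminus_left by force
  then obtain u where u: "\<forall>j\<in>J0. u j \<ge> 0" "\<forall>e\<in>E. - c e = (\<Sum>j\<in>J0. u j * a j e)"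
    using farkas_lemma[OF assms(1) \<open>finite J0\<close>, of "\<lambda>e. - c e" a] by blast
  define u' where "u' j = (if j \<in> J0 then u j else 0)" for j
  have "(\<Sum>j\<in>J. u' j * a j e) = (\<Sum>j\<in>J0. u j * a j e)" for e
    unfolding u'_def J0_def using assms(2)
    by (simp add: if_distrib[where f="\<lambda>v. v * _"] sum.inter_filter cong: if_cong)
  show ?thesis
  proof (rule that[of u'])
    show "\<forall>j\<in>J. u' j \<ge> 0" "\<forall>j\<in>J. u' j \<noteq> 0 \<longrightarrow> dot E (a j) x = \<beta> j"
      using u(1) unfolding u'_def J0_def by auto
    show "\<forall>e\<in>E. c e + (\<Sum>j\<in>J. u' j * a j e) = 0"
      using u(2) \<open>\<And>e. (\<Sum>j\<in>J. u' j * a j e) = _\<close> by (simp add: add_eq_0_iff)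
  qed
qed

lemma polyhedron_minimizer_lagrangian:
  assumes "finite E" "finite J" "P \<subseteq> J" and x: "x \<in> polyhedron E J a \<beta>"
    and min: "\<forall>x'\<in>polyhedron E J a \<beta>. dot E c x \<le> dot E c x'"
  obtains u where "\<forall>j\<in>J. u j \<ge> 0"
    "\<forall>x'\<in>polyhedron E P a \<beta>. dot E c x \<le> dot E c x' + (\<Sum>j\<in>J - P. u j * (dot E (a j) x' - \<beta> j))"
proof -
  obtain u where u: "\<forall>j\<in>J. u j \<ge> 0" "\<forall>j\<in>J. u j \<noteq> 0 \<longrightarrow> dot E (a j) x = \<beta> j"
    "\<forall>e\<in>E. c e + (\<Sum>j\<in>J. u j * a j e) = 0"
    using polyhedron_minimizer_multipliers[OF assms(1,2) x min] by blast
  have dot_c: "dot E c z = - (\<Sum>j\<in>J. u j * dot E (a j) z)" for z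
  proof -
    have "dot E c z = dot E (\<lambda>e. - (\<Sum>j\<in>J. u j * a j e)) z"
      unfolding dot_def using u(3) by (intro sum.cong) (auto simp: eq_neg_iff_add_eq_0[symmetric])
    then show ?thesis unfolding dot_uminus_left dot_sum_left .
  qed
  have split: "(\<Sum>j\<in>J. g j) = (\<Sum>j\<in>P. g j) + (\<Sum>j\<in>J - P. g j)" for g :: "_ \<Rightarrow> real"
    using assms(2,3) by (metis sum.subset_diff add.commute)
  have "dot E c x' + (\<Sum>j\<in>J - P. u j * (dot E (a j) x' - \<beta> j)) \<ge> dot E c x"
    if x': "x' \<in> polyhedron E P a \<beta>" for x'
  proof -
    have "(\<Sum>j\<in>P. u j * dot E (a j) x') \<le> (\<Sum>j\<in>P. u j * \<beta> j)"
      using x' u(1) assms(3) unfolding polyhedron_def by (intro sum_mono mult_left_mono) auto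
    moreover have "(\<Sum>j\<in>J. u j * dot E (a j) x) = (\<Sum>j\<in>J. u j * \<beta> j)"
      using u(2) by (intro sum.cong) auto
    ultimately show ?thesis
      unfolding dot_c split[of "\<lambda>j. u j * dot E (a j) _"] split[of "\<lambda>j. u j * \<beta> j"]
      by (simp add: algebra_simps sum_subtractf)
  qed
  then show ?thesis using that u(1) by blast
qed

section \<open>The spanning tree polytope as a polyhedron\<close>

lemma graph_finite_edges: "graph V E \<Longrightarrow> finite E"
  unfolding graph_def by (meson Pow_iff finite_Pow_iff finite_subset subsetI)

lemma graph_edge_nonempty: "graph V E \<Longrightarrow> e \<in> E \<Longrightarrow> e \<noteq> {}"
  unfolding graph_def by fastforce

lemma inside_subset: "inside E S \<subseteq> E" and cut_subset: "cut E S \<subseteq> E"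
  unfolding inside_def cut_def by auto

lemma cost_eq_dot: "cost E c x = dot E c x"
  unfolding cost_def dot_def ..

text \<open>The rows of \<open>(P_\<lambda>)\<close> written as inequalities \<open>row \<bullet> x \<le> rhs\<close>: nonnegativity, subtour
  elimination, \<open>x(E) = |V| - 1\<close> as two inequalities, and the degree bounds, which carry their
  right-hand side \<open>\<lambda> b_S\<close> so that \<open>rhs\<close> depends on \<open>V\<close> only.\<close>
datatype 'a lp_row = Nonneg "'a set" | Subtour "'a set" | Total_le | Total_ge | Degree "'a set" real

fun row :: "'a set set \<Rightarrow> 'a lp_row \<Rightarrow> 'a set \<Rightarrow> real" where
  "row E (Nonneg g) = (\<lambda>e. - of_bool (e = g))"
| "row E (Subtour S) = (\<lambda>e. of_bool (e \<in> inside E S))"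
| "row E Total_le = (\<lambda>e. 1)"
| "row E Total_ge = (\<lambda>e. - 1)"
| "row E (Degree S \<beta>) = (\<lambda>e. of_bool (e \<in> cut E S))"

declare row.simps [simp del]

fun rhs :: "'a set \<Rightarrow> 'a lp_row \<Rightarrow> real" where
  "rhs V (Nonneg g) = 0"
| "rhs V (Subtour S) = real (card S) - 1"
| "rhs V Total_le = real (card V) - 1"
| "rhs V Total_ge = 1 - real (card V)"
| "rhs V (Degree S \<beta>) = \<beta>"

definition st_rows :: "'a set \<Rightarrow> 'a set set \<Rightarrow> 'a lp_row set" where
  "st_rows V E = Nonneg ` E \<union> Subtour ` {S. S \<noteq> {} \<and> S \<subset> V} \<union> {Total_le, Total_ge}"

definition degree_rows :: "'a set set \<Rightarrow> ('a set \<Rightarrow> int) \<Rightarrow> real \<Rightarrow> 'a lp_row set" where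
  "degree_rows \<S> b lam = (\<lambda>S. Degree S (lam * real_of_int (b S))) ` \<S>"

lemma dot_row_Nonneg: "finite E \<Longrightarrow> g \<in> E \<Longrightarrow> dot E (row E (Nonneg g)) x = - x g"
  using dot_indicator[of E "{g}" x] by (simp add: row.simps dot_uminus_left)

lemma dot_row_Subtour: "finite E \<Longrightarrow> dot E (row E (Subtour S)) x = sum x (inside E S)"
  by (simp add: row.simps dot_indicator inside_subset)

lemma dot_row_Degree: "finite E \<Longrightarrow> dot E (row E (Degree S \<beta>)) x = sum x (cut E S)"
  by (simp add: row.simps dot_indicator cut_subset)

lemma dot_row_Total: "dot E (row E Total_le) x = sum x E" "dot E (row E Total_ge) x = - sum x E"
  by (simp_all add: row.simps dot_def sum_negf)

lemmas dot_row = dot_row_Nonneg dot_row_Subtour dot_row_Degree dot_row_Total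

lemma finite_st_rows: "finite V \<Longrightarrow> finite E \<Longrightarrow> finite (st_rows V E)"
proof -
  assume "finite V" "finite E"
  have "finite {S. S \<noteq> {} \<and> S \<subset> V}"
    using \<open>finite V\<close> by (auto intro: finite_subset[of _ "Pow V"])
  then show ?thesis unfolding st_rows_def using \<open>finite E\<close> by simp
qed

lemma P_ST_eq_polyhedron:
  assumes "graph V E"
  shows "P_ST V E = polyhedron E (st_rows V E) (row E) (rhs V)"
proof -
  have "x \<in> polyhedron E (st_rows V E) (row E) (rhs V) \<longleftrightarrow>
      sum x E \<le> real (card V) - 1 \<and> - sum x E \<le> 1 - real (card V) \<and> (\<forall>e\<in>E. x e \<ge> 0) \<and>
      (\<forall>S. S \<noteq> {} \<and> S \<subset> V \<longrightarrow> sum x (inside E S) \<le> real (card S) - 1)" for x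
    using graph_finite_edges[OF assms] unfolding polyhedron_def st_rows_def by (simp add: dot_row ball_Un)
  then show ?thesis unfolding P_ST_def by auto
qed

lemma feasible_P_iff_polyhedron:
  assumes "graph V E"
  shows "feasible_P V E \<S> b lam x \<longleftrightarrow>
    x \<in> polyhedron E (st_rows V E \<union> degree_rows \<S> b lam) (row E) (rhs V)"
  using graph_finite_edges[OF assms]
  unfolding feasible_P_def P_ST_eq_polyhedron[OF assms]
  by (simp add: polyhedron_def degree_rows_def dot_row ball_Un)

section \<open>Lagrangian duality\<close>

lemma cost_cy:
  assumes "finite E" "finite \<S>"
  shows "cost E (cy E \<S> c y) x = cost E c x + (\<Sum>S\<in>\<S>. y S * sum x (cut E S))"
proof -
  have "cy E \<S> c y = (\<lambda>e. c e + (\<Sum>S\<in>\<S>. y S * of_bool (e \<in> cut E S)))"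
    unfolding cy_def using assms(2)
    by (simp add: sum.inter_filter of_bool_def if_distrib[where f="\<lambda>v. _ * v"] cong: if_cong)
  moreover have "dot E (\<lambda>e. \<Sum>S\<in>\<S>. y S * of_bool (e \<in> cut E S)) x
      = (\<Sum>S\<in>\<S>. y S * dot E (\<lambda>e. of_bool (e \<in> cut E S)) x)"
    by (rule dot_sum_left)
  ultimately show ?thesis
    using assms(1) by (simp add: cost_eq_dot dot_add_left dot_indicator cut_subset)
qed

lemma cost_cy_eq_lagrangian:
  assumes "finite E" "finite \<S>"
  shows "cost E (cy E \<S> c y) x - lam * (\<Sum>S\<in>\<S>. real_of_int (b S) * y S)
    = cost E c x + (\<Sum>S\<in>\<S>. y S * (sum x (cut E S) - lam * real_of_int (b S)))"
  unfolding cost_cy[OF assms] by (simp add: algebra_simps sum_subtractf sum_distrib_left)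

lemma sum_degree_rows:
  assumes "finite E"
  shows "(\<Sum>j\<in>degree_rows \<S> b lam. u j * (dot E (row E j) x - rhs V j))
    = (\<Sum>S\<in>\<S>. u (Degree S (lam * real_of_int (b S))) * (sum x (cut E S) - lam * real_of_int (b S)))"
  unfolding degree_rows_def using assms
  by (subst sum.reindex) (auto simp: inj_on_def dot_row)

lemma P_ST_bounds:
  assumes "finite E" "x \<in> P_ST V E" "e \<in> E"
  shows "0 \<le> x e" "x e \<le> real (card V)"
proof -
  show "0 \<le> x e" using assms unfolding P_ST_def by blast
  have "x e \<le> sum x E"
    using assms unfolding P_ST_def by (intro member_le_sum) auto
  then show "x e \<le> real (card V)" using assms(2) unfolding P_ST_def by simp
qed

lemma cost_bdd_below_P_ST:
  assumes "finite E"
  shows "bdd_below ((\<lambda>x. cost E w x - K) ` P_ST V E)"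
proof (rule bdd_belowI2)
  fix x assume x: "x \<in> P_ST V E"
  have "(\<Sum>e\<in>E. - (\<bar>w e\<bar> * real (card V))) \<le> (\<Sum>e\<in>E. w e * x e)"
  proof (rule sum_mono)
    fix e assume "e \<in> E"
    then have "\<bar>w e * x e\<bar> \<le> \<bar>w e\<bar> * real (card V)"
      using P_ST_bounds[OF assms x] by (simp add: abs_mult mult_left_mono)
    then show "- (\<bar>w e\<bar> * real (card V)) \<le> w e * x e" by linarith
  qed
  then show "(\<Sum>e\<in>E. - (\<bar>w e\<bar> * real (card V))) - K \<le> cost E w x - K"
    unfolding cost_def by simp
qed

lemma g_lam_le:
  assumes "finite E" "x \<in> P_ST V E"
  shows "g_lam V E c \<S> b lam y \<le> cost E (cy E \<S> c y) x - lam * (\<Sum>S\<in>\<S>. real_of_int (b S) * y S)"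
  unfolding g_lam_def by (rule cINF_lower[OF cost_bdd_below_P_ST[OF assms(1)] assms(2)])

text \<open>The multipliers of the degree rows in the KKT conditions of \<open>(P_\<lambda>)\<close> are a dual solution
  without duality gap.\<close>
lemma lagrangian_strong_duality:
  assumes G: "graph V E" and "finite \<S>" and opt: "optimal_P V E c \<S> b lam x"
  obtains y where "\<forall>S\<in>\<S>. y S \<ge> 0" "cost E c x \<le> g_lam V E c \<S> b lam y"
proof -
  let ?P = "st_rows V E" and ?D = "degree_rows \<S> b lam"
  have fin: "finite E" "finite (?P \<union> ?D)"
    using G \<open>finite \<S>\<close> graph_finite_edges finite_st_rows unfolding graph_def degree_rows_def by auto
  have "x \<in> polyhedron E (?P \<union> ?D) (row E) (rhs V)"
    "\<forall>x'\<in>polyhedron E (?P \<union> ?D) (row E) (rhs V). dot E c x \<le> dot E c x'"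
    using opt unfolding optimal_P_def feasible_P_iff_polyhedron[OF G] cost_eq_dot by auto
  then obtain u where u: "\<forall>j\<in>?P \<union> ?D. u j \<ge> 0" and lag:
    "\<forall>x'\<in>polyhedron E ?P (row E) (rhs V).
       dot E c x \<le> dot E c x' + (\<Sum>j\<in>(?P \<union> ?D) - ?P. u j * (dot E (row E j) x' - rhs V j))"
    using polyhedron_minimizer_lagrangian[OF fin, of ?P] by blast
  define y where "y S = u (Degree S (lam * real_of_int (b S)))" for S
  have "(?P \<union> ?D) - ?P = ?D"
    unfolding st_rows_def degree_rows_def by auto
  have "cost E c x \<le> cost E (cy E \<S> c y) x' - lam * (\<Sum>S\<in>\<S>. real_of_int (b S) * y S)"
    if "x' \<in> P_ST V E" for x'
  proof -
    have "cost E c x \<le> cost E c x' + (\<Sum>j\<in>?D. u j * (dot E (row E j) x' - rhs V j))"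
      using lag that \<open>(?P \<union> ?D) - ?P = ?D\<close> unfolding P_ST_eq_polyhedron[OF G] cost_eq_dot by simp
    also have "\<dots> = cost E (cy E \<S> c y) x' - lam * (\<Sum>S\<in>\<S>. real_of_int (b S) * y S)"
      unfolding cost_cy_eq_lagrangian[OF fin(1) \<open>finite \<S>\<close>] sum_degree_rows[OF fin(1)] y_def ..
    finally show ?thesis .
  qed
  moreover have "P_ST V E \<noteq> {}"
    using opt unfolding optimal_P_def feasible_P_def by blast
  ultimately have "cost E c x \<le> g_lam V E c \<S> b lam y"
    unfolding g_lam_def by (intro cINF_greatest) auto
  moreover have "\<forall>S\<in>\<S>. y S \<ge> 0"
    using u unfolding y_def degree_rows_def by auto
  ultimately show ?thesis using that by blast
qed

text \<open>Strong duality gives \<open>g_\<lambda>(ys) \<ge> c(xs)\<close>, while the Lagrangian of \<open>ys\<close> at \<open>xs\<close> is at most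
  \<open>c(xs)\<close> because \<open>xs\<close> is feasible and \<open>ys \<ge> 0\<close>.\<close>
lemma dual_optimal_cy_minimizer:
  assumes G: "graph V E" and "finite \<S>" and opt: "optimal_P V E c \<S> b lam xs"
    and dopt: "dual_optimal V E c \<S> b lam ys" and x: "x \<in> P_ST V E"
  shows "cost E (cy E \<S> c ys) xs \<le> cost E (cy E \<S> c ys) x"
proof -
  have fE: "finite E" using G by (rule graph_finite_edges)
  obtain y where "\<forall>S\<in>\<S>. y S \<ge> 0" "cost E c xs \<le> g_lam V E c \<S> b lam y"
    using lagrangian_strong_duality[OF G \<open>finite \<S>\<close> opt] by blast
  then have "cost E c xs \<le> g_lam V E c \<S> b lam ys"
    using dopt unfolding dual_optimal_def by fastforce
  also have "\<dots> \<le> cost E (cy E \<S> c ys) x - lam * (\<Sum>S\<in>\<S>. real_of_int (b S) * ys S)"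
    by (rule g_lam_le[OF fE x])
  finally have primal: "cost E c xs \<le> cost E (cy E \<S> c ys) x - lam * (\<Sum>S\<in>\<S>. real_of_int (b S) * ys S)" .
  have "(\<Sum>S\<in>\<S>. ys S * (sum xs (cut E S) - lam * real_of_int (b S))) \<le> 0"
    using opt dopt unfolding optimal_P_def feasible_P_def dual_optimal_def
    by (intro sum_nonpos mult_nonneg_nonpos) auto
  then have "cost E (cy E \<S> c ys) xs - lam * (\<Sum>S\<in>\<S>. real_of_int (b S) * ys S) \<le> cost E c xs"
    unfolding cost_cy_eq_lagrangian[OF fE \<open>finite \<S>\<close>] by simp
  with primal show ?thesis by linarith
qed

section \<open>Tight sets\<close>

definition tight :: "'a set \<Rightarrow> 'a set set \<Rightarrow> ('a set \<Rightarrow> real) \<Rightarrow> 'a set \<Rightarrow> bool" where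
  "tight V E x A \<longleftrightarrow> A \<noteq> {} \<and> A \<subseteq> V \<and> sum x (inside E A) = real (card A) - 1"

lemma tight_laminar_iff: "tight_laminar V E x \<L> \<longleftrightarrow> laminar \<L> \<and> (\<forall>A\<in>\<L>. tight V E x A)"
  unfolding tight_laminar_def tight_def ..

lemma P_ST_inside_le:
  assumes "graph V E" "x \<in> P_ST V E" "A \<noteq> {}" "A \<subseteq> V"
  shows "sum x (inside E A) \<le> real (card A) - 1"
proof (cases "A = V")
  case True
  then have "inside E A = E" using assms(1) unfolding inside_def graph_def by auto
  then show ?thesis using assms(2) True unfolding P_ST_def by simp
next
  case False
  then show ?thesis using assms unfolding P_ST_def by auto
qed

lemma sum_inside_Un_Int:
  fixes x :: "'a set \<Rightarrow> real"
  assumes "finite E"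
  shows "sum x (inside E A) + sum x (inside E B) + sum x (inside E (A \<union> B) - (inside E A \<union> inside E B))
    = sum x (inside E (A \<union> B)) + sum x (inside E (A \<inter> B))"
proof -
  have fin: "finite (inside E A)" "finite (inside E B)" "finite (inside E (A \<union> B))"
    using assms inside_subset finite_subset by blast+
  have int: "inside E A \<inter> inside E B = inside E (A \<inter> B)"
    and sub: "inside E A \<union> inside E B \<subseteq> inside E (A \<union> B)"
    unfolding inside_def by auto
  show ?thesis
    using sum.union_inter[OF fin(1,2), of x, unfolded int] sum.subset_diff[OF sub fin(3), of x]
    by linarith
qed

text \<open>Supermodularity of \<open>A \<mapsto> x(E(A))\<close> against modularity of \<open>A \<mapsto> |A| - 1\<close>: uncrossing two
  tight sets forces equality everywhere, including zero weight on the edges between \<open>A - B\<close> and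
  \<open>B - A\<close>.\<close>
lemma tight_uncross:
  assumes G: "graph V E" and x: "x \<in> P_ST V E" and A: "tight V E x A" and B: "tight V E x B"
    and AB: "A \<inter> B \<noteq> {}"
  shows "tight V E x (A \<union> B)" "tight V E x (A \<inter> B)"
    and "\<And>g. g \<in> inside E (A \<union> B) \<Longrightarrow> \<not> g \<subseteq> A \<Longrightarrow> \<not> g \<subseteq> B \<Longrightarrow> x g = 0"
proof -
  let ?X = "inside E (A \<union> B) - (inside E A \<union> inside E B)"
  have fE: "finite E" using G by (rule graph_finite_edges)
  have fin: "finite A" "finite B"
    using A B G unfolding tight_def graph_def by (auto intro: finite_subset)
  have card: "real (card A) + real (card B) = real (card (A \<union> B)) + real (card (A \<inter> B))"
    using card_Un_Int[OF fin] by simp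
  have AB_V: "A \<union> B \<subseteq> V" "A \<inter> B \<subseteq> V" using A B unfolding tight_def by auto
  have U: "sum x (inside E (A \<union> B)) \<le> real (card (A \<union> B)) - 1"
    using P_ST_inside_le[OF G x _ AB_V(1)] AB by blast
  have I: "sum x (inside E (A \<inter> B)) \<le> real (card (A \<inter> B)) - 1"
    using P_ST_inside_le[OF G x AB AB_V(2)] .
  have x0: "\<forall>g\<in>?X. x g \<ge> 0" using x unfolding P_ST_def inside_def by auto
  then have "sum x ?X \<ge> 0" by (intro sum_nonneg) auto
  moreover have "sum x (inside E A) = real (card A) - 1" "sum x (inside E B) = real (card B) - 1"
    using A B unfolding tight_def by auto
  ultimately have X: "sum x ?X = 0" "sum x (inside E (A \<union> B)) = real (card (A \<union> B)) - 1"
    "sum x (inside E (A \<inter> B)) = real (card (A \<inter> B)) - 1"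
    using sum_inside_Un_Int[OF fE, of x A B] U I card by linarith+
  have finX: "finite ?X" using fE inside_subset by (metis Diff_subset finite_subset)
  show "tight V E x (A \<union> B)" "tight V E x (A \<inter> B)"
    using X(2,3) AB AB_V unfolding tight_def by auto
  fix g assume "g \<in> inside E (A \<union> B)" "\<not> g \<subseteq> A" "\<not> g \<subseteq> B"
  then have "g \<in> ?X" unfolding inside_def by auto
  then show "x g = 0" using X(1) sum_nonneg_eq_0_iff[OF finX] x0 by blast
qed

lemma tight_Un_tight_family:
  assumes G: "graph V E" and x: "x \<in> P_ST V E" and "finite I" and T: "tight V E x T"
    and "\<forall>M\<in>I. tight V E x M \<and> M \<inter> T \<noteq> {}"
  shows "tight V E x (T \<union> \<Union>I) \<and>
    (\<forall>g\<in>inside E (T \<union> \<Union>I). x g \<noteq> 0 \<longrightarrow> g \<subseteq> T \<or> (\<exists>M\<in>I. g \<subseteq> M))"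
  using assms(3,5)
proof (induction I rule: finite_induct)
  case empty
  then show ?case using T unfolding inside_def by simp
next
  case (insert M I)
  let ?A = "T \<union> \<Union>I"
  have A: "tight V E x ?A" "\<forall>g\<in>inside E ?A. x g \<noteq> 0 \<longrightarrow> g \<subseteq> T \<or> (\<exists>M\<in>I. g \<subseteq> M)"
    using insert by auto
  have M: "tight V E x M" "?A \<inter> M \<noteq> {}" using insert.prems by auto
  have "T \<union> \<Union>(insert M I) = ?A \<union> M" by blast
  moreover have "g \<subseteq> T \<or> (\<exists>M'\<in>insert M I. g \<subseteq> M')"
    if g: "g \<in> inside E (?A \<union> M)" "x g \<noteq> 0" for g
  proof (cases "g \<subseteq> ?A")
    case True
    then show ?thesis using A(2) g unfolding inside_def by auto
  next
    case False
    then show ?thesis using tight_uncross(3)[OF G x A(1) M] g by auto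
  qed
  ultimately show ?case using tight_uncross(1)[OF G x A(1) M] by auto
qed

section \<open>Laminar decompositions\<close>

lemma maximal_children_subset: "M \<in> maximal_children \<L> L \<Longrightarrow> M \<in> \<L> \<and> M \<subset> L"
  unfolding maximal_children_def by blast

lemma maximal_children_disjoint:
  assumes "laminar \<L>" "M \<in> maximal_children \<L> L" "N \<in> maximal_children \<L> L" "M \<noteq> N"
  shows "M \<inter> N = {}"
proof -
  have M: "M \<in> \<L>" "M \<subset> L" "\<not> (\<exists>M'\<in>\<L>. M \<subset> M' \<and> M' \<subset> L)"
    and N: "N \<in> \<L>" "N \<subset> L" "\<not> (\<exists>M'\<in>\<L>. N \<subset> M' \<and> M' \<subset> L)"
    using assms(2,3) unfolding maximal_children_def by auto
  have "M \<subseteq> N \<or> N \<subseteq> M \<or> M \<inter> N = {}"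
    using assms(1) M(1) N(1) unfolding laminar_def by blast
  then show ?thesis
    using M N assms(4) by (metis psubset_eq)
qed

lemma exists_maximal_child:
  assumes "finite \<L>" "A \<in> \<L>" "A \<subset> L"
  obtains M where "M \<in> maximal_children \<L> L" "A \<subseteq> M"
proof -
  let ?X = "{M\<in>\<L>. A \<subseteq> M \<and> M \<subset> L}"
  have "finite ?X" "A \<in> ?X" using assms by auto
  then obtain M where M: "M \<in> ?X" "\<forall>N\<in>?X. M \<subseteq> N \<longrightarrow> M = N"
    by (metis (no_types, lifting) finite_has_maximal2)
  have "\<not> (\<exists>M'\<in>\<L>. M \<subset> M' \<and> M' \<subset> L)"
  proof
    assume "\<exists>M'\<in>\<L>. M \<subset> M' \<and> M' \<subset> L"
    then obtain M' where "M' \<in> \<L>" "M \<subset> M'" "M' \<subset> L" by blast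
    moreover have "A \<subseteq> M" using M(1) by simp
    ultimately have "M' \<in> ?X" by auto
    then have "M = M'" using M(2) \<open>M \<subset> M'\<close> by blast
    then show False using \<open>M \<subset> M'\<close> by simp
  qed
  then have "M \<in> maximal_children \<L> L"
    using M(1) unfolding maximal_children_def by simp
  then show ?thesis using that M(1) by simp
qed

lemma laminar_insert_Un_children:
  assumes lam: "laminar \<L>" and fin: "finite \<L>" and L: "L \<in> \<L>" and "T \<subseteq> L"
  shows "laminar (insert (T \<union> \<Union>{M\<in>maximal_children \<L> L. M \<inter> T \<noteq> {}}) \<L>)"
proof -
  let ?T = "T \<union> \<Union>{M\<in>maximal_children \<L> L. M \<inter> T \<noteq> {}}"
  have TL: "?T \<subseteq> L" using \<open>T \<subseteq> L\<close> maximal_children_subset by blast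
  have "A \<subseteq> ?T \<or> ?T \<subseteq> A \<or> A \<inter> ?T = {}" if A: "A \<in> \<L>" for A
  proof (cases "A \<subset> L")
    case True
    then obtain M where M: "M \<in> maximal_children \<L> L" "A \<subseteq> M"
      using exists_maximal_child[OF fin A] by blast
    show ?thesis
    proof (cases "M \<inter> T = {}")
      case True
      then have "M \<inter> ?T = {}"
        using maximal_children_disjoint[OF lam M(1)] by blast
      then show ?thesis using M(2) by blast
    qed (use M in blast)
  next
    case False
    then have "L \<subseteq> A \<or> A \<inter> L = {}" using lam A L unfolding laminar_def by blast
    then show ?thesis using TL by blast
  qed
  then show ?thesis using lam unfolding laminar_def by blast
qed

lemma laminar_decomposition_finite:
  assumes "graph V E" "laminar_decomposition V E x \<L>"
  shows "finite \<L>"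
proof -
  have "\<L> \<subseteq> Pow V"
    using assms(2) unfolding laminar_decomposition_def tight_laminar_def by blast
  then show ?thesis using assms(1) unfolding graph_def by (simp add: finite_subset)
qed

lemma laminar_decomposition_maximal:
  assumes "laminar_decomposition V E x \<L>" "tight V E x T" "laminar (insert T \<L>)"
  shows "T \<in> \<L>"
  using assms unfolding laminar_decomposition_def tight_laminar_iff by blast

text \<open>Grow \<open>T \<inter> L\<close> by the children of \<open>L\<close> it meets: the result is tight and laminar with
  \<open>\<L>\<close>, hence a member of \<open>\<L>\<close>, hence \<open>L\<close> itself; the uncrossing steps leave no positive edge
  between the pieces.\<close>
lemma tight_contains_contracted_edge:
  assumes G: "graph V E" and x: "x \<in> P_ST V E" and LD: "laminar_decomposition V E x \<L>"
    and L: "L \<in> \<L>" and e: "e \<in> contracted_edges E \<L> L" and f: "f \<in> contracted_edges E \<L> L"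
    and "x f > 0" and T: "tight V E x T" and "e \<subseteq> T"
  shows "f \<subseteq> T"
proof -
  have lam: "laminar \<L>" and tight_\<L>: "\<forall>A\<in>\<L>. tight V E x A"
    using LD unfolding laminar_decomposition_def tight_laminar_iff by auto
  have fin: "finite \<L>" using G LD by (rule laminar_decomposition_finite)
  have e_in: "e \<in> E" "e \<subseteq> L" using e unfolding contracted_edges_def inside_def by auto
  define T' where "T' = T \<inter> L"
  have "e \<subseteq> T'" using \<open>e \<subseteq> T\<close> e_in unfolding T'_def by blast
  then have "tight V E x T'"
    unfolding T'_def using tight_uncross(2)[OF G x T] tight_\<L> L graph_edge_nonempty[OF G e_in(1)]
    by blast
  define I where "I = {M\<in>maximal_children \<L> L. M \<inter> T' \<noteq> {}}"
  have "finite I" using fin unfolding I_def maximal_children_def by simp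
  moreover have "\<forall>M\<in>I. tight V E x M \<and> M \<inter> T' \<noteq> {}"
    using tight_\<L> maximal_children_subset unfolding I_def by blast
  ultimately have T'': "tight V E x (T' \<union> \<Union>I)"
    and pos: "\<forall>g\<in>inside E (T' \<union> \<Union>I). x g \<noteq> 0 \<longrightarrow> g \<subseteq> T' \<or> (\<exists>M\<in>I. g \<subseteq> M)"
    using tight_Un_tight_family[OF G x _ \<open>tight V E x T'\<close>] by blast+
  have "laminar (insert (T' \<union> \<Union>I) \<L>)"
    unfolding I_def by (rule laminar_insert_Un_children[OF lam fin L]) (simp add: T'_def)
  then have "T' \<union> \<Union>I \<in> \<L>" by (rule laminar_decomposition_maximal[OF LD T''])
  have "T' \<union> \<Union>I = L"
  proof (rule ccontr)
    assume "T' \<union> \<Union>I \<noteq> L"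
    moreover have "T' \<union> \<Union>I \<subseteq> L" unfolding T'_def I_def using maximal_children_subset by blast
    ultimately obtain M where "M \<in> maximal_children \<L> L" "T' \<union> \<Union>I \<subseteq> M"
      using exists_maximal_child[OF fin \<open>T' \<union> \<Union>I \<in> \<L>\<close>] by blast
    then show False using e \<open>e \<subseteq> T'\<close> unfolding contracted_edges_def by blast
  qed
  then have "f \<subseteq> T' \<or> (\<exists>M\<in>I. f \<subseteq> M)"
    using pos f \<open>x f > 0\<close> unfolding contracted_edges_def by auto
  then show ?thesis using f unfolding I_def T'_def contracted_edges_def by blast
qed

lemma active_st_row_balanced:
  assumes G: "graph V E" and x: "x \<in> P_ST V E" and LD: "laminar_decomposition V E x \<L>"
    and L: "L \<in> \<L>" and e: "e \<in> contracted_edges E \<L> L" and f: "f \<in> contracted_edges E \<L> L"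
    and pos: "x e > 0" "x f > 0"
    and j: "j \<in> st_rows V E" and active: "dot E (row E j) x = rhs V j"
  shows "dot E (row E j) (\<lambda>g. of_bool (g = e) - of_bool (g = f)) = 0"
proof -
  have fE: "finite E" using G by (rule graph_finite_edges)
  have ef: "e \<in> E" "f \<in> E" using e f unfolding contracted_edges_def inside_def by auto
  from j consider (Nonneg) g where "g \<in> E" "j = Nonneg g"
    | (Subtour) S where "S \<noteq> {}" "S \<subset> V" "j = Subtour S"
    | "j = Total_le" | "j = Total_ge"
    unfolding st_rows_def by auto
  then show ?thesis
  proof cases
    case Nonneg
    then have "x g = 0" using active dot_row(1)[OF fE] by simp
    then have "g \<noteq> e" "g \<noteq> f" using pos by auto
    then show ?thesis using Nonneg by (simp add: dot_unit_diff[OF fE ef] row.simps)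
  next
    case Subtour
    then have "tight V E x S" using active dot_row(2)[OF fE] unfolding tight_def by auto
    then have "e \<subseteq> S \<longleftrightarrow> f \<subseteq> S"
      using tight_contains_contracted_edge[OF G x LD L] e f pos by blast
    then show ?thesis using Subtour ef by (simp add: dot_unit_diff[OF fE ef] row.simps inside_def)
  qed (simp_all add: dot_unit_diff[OF fE ef] row.simps)
qed

text \<open>The direction \<open>1_g - 1_h\<close> is orthogonal to every active row at \<open>xs\<close>, hence feasible.\<close>
lemma contracted_support_cy_le:
  assumes G: "graph V E" and "finite \<S>" and opt: "optimal_P V E c \<S> b lam xs"
    and dopt: "dual_optimal V E c \<S> b lam ys" and LD: "laminar_decomposition V E xs \<L>"
    and L: "L \<in> \<L>" and gh: "g \<in> contracted_edges E \<L> L" "h \<in> contracted_edges E \<L> L"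
    and pos: "xs g > 0" "xs h > 0"
  shows "cy E \<S> c ys h \<le> cy E \<S> c ys g"
proof -
  have fin: "finite V" "finite E" using G graph_finite_edges unfolding graph_def by auto
  have xs: "xs \<in> P_ST V E" using opt unfolding optimal_P_def feasible_P_def by blast
  have min: "\<forall>x\<in>polyhedron E (st_rows V E) (row E) (rhs V).
      dot E (cy E \<S> c ys) xs \<le> dot E (cy E \<S> c ys) x"
    using dual_optimal_cy_minimizer[OF G \<open>finite \<S>\<close> opt dopt]
    unfolding P_ST_eq_polyhedron[OF G] cost_eq_dot by blast
  have "g \<in> E" "h \<in> E" using gh unfolding contracted_edges_def inside_def by auto
  moreover have "dot E (cy E \<S> c ys) (\<lambda>k. of_bool (k = g) - of_bool (k = h)) \<ge> 0"
    using polyhedron_minimizer_direction[OF finite_st_rows[OF fin] xs[unfolded P_ST_eq_polyhedron[OF G]] min]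
      active_st_row_balanced[OF G xs LD L gh pos]
    by simp
  ultimately show ?thesis by (simp add: dot_unit_diff[OF fin(2)])
qed

theorem lemma5:
  fixes V :: "'a set" and E :: "'a set set" and c :: "'a set \<Rightarrow> real"
    and \<S> :: "'a set set" and b :: "'a set \<Rightarrow> int" and lam :: real
    and xs :: "'a set \<Rightarrow> real" and ys :: "'a set \<Rightarrow> real" and \<L> :: "'a set set"
  assumes "connected_graph V E"
    and "\<forall>e\<in>E. c e \<ge> 0"
    and "chain_family V \<S>"
    and "lam \<ge> 1"
    and "optimal_P V E c \<S> b lam xs"
    and "dual_optimal V E c \<S> b lam ys"
    and "laminar_decomposition V E xs \<L>"
  shows "\<forall>L\<in>\<L>. \<forall>e\<in>contracted_edges E \<L> L. \<forall>f\<in>contracted_edges E \<L> L.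
           xs e > 0 \<longrightarrow> xs f > 0 \<longrightarrow> cy E \<S> c ys e = cy E \<S> c ys f"
proof (intro ballI impI)
  fix L e f
  assume "L \<in> \<L>" "e \<in> contracted_edges E \<L> L" "f \<in> contracted_edges E \<L> L" "xs e > 0" "xs f > 0"
  have G: "graph V E" using assms(1) unfolding connected_graph_def by blast
  have "finite \<S>"
    using assms(3) G unfolding chain_family_def graph_def by (auto intro: finite_subset[of _ "Pow V"])
  then show "cy E \<S> c ys e = cy E \<S> c ys f"
    using contracted_support_cy_le[OF G _ assms(5,6,7)] \<open>L \<in> \<L>\<close> \<open>e \<in> _\<close> \<open>f \<in> _\<close>
      \<open>xs e > 0\<close> \<open>xs f > 0\<close>
    by (meson order_antisym)
qed

end
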